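(* The vector space $A$, with $b\cdot a=ba$ ($b\in B$, $a\in A$), coaction $\delta(a)=a_{(1)}\otimes\pi_C(a_{(2)})$, and inner product $\langle a,a'\rangle=\Phi_A(a^*a')$, is a unitary DK-representation, i.e. an object of ${}_B\mathrm{Rep}^C$.
   Context: $A$ is a CQG Hopf $*$-algebra: a complex Hopf algebra $(A,\Delta_A,\varepsilon_A,S_A)$ with anti-linear involution making it a $*$-algebra with $\Delta_A$ a $*$-homomorphism, admitting a state $\Phi_A$ with $(\Phi_A\otimes\mathrm{id})\Delta_A(a)=\Phi_A(a)1=(\mathrm{id}\otimes\Phi_A)\Delta_A(a)$. $B\subseteq A$ is a unital right coideal $*$-subalgebra ($\Delta_A(B)\subseteq B\odot A$), $B_+=B\cap\ker\varepsilon_A$, $C=A/AB_+$ with quotient map $\pi_C$; $C$ is a coalgebra (comultiplication induced by $\Delta_A$), a left $A$-module by $a\cdot\pi_C(a')=\pi_C(aa')$, with involution $\pi_C(a)^\dagger=\pi_C(S_A(a)^* )$. ${}_B\mathrm{Rep}^C$: left $B$-modules $V$ with right $C$-comodule structure $v\mapsto v_{(0)}\otimes v_{(1)}$ satisfying $(bv)_{(0)}\otimes(bv)_{(1)}=b_{(1)}v_{(0)}\otimes b_{(2)}\cdot v_{(1)}$, which are pre-Hilbert spaces with $\langle v,bw\rangle=\langle b^*v,w\rangle$ and $\langle v,w_{(0)}\rangle w_{(1)}=\langle v_{(0)},w\rangle v_{(1)}^\dagger$. *)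

theory Defs
  imports Complex_Main
begin

text \<open>
  Algebraic tensors in V (x) W are represented by
  finite lists of pairs (sums of simple tensors); two such lists denote the same tensor iff
  every bilinear form on V x W takes the same value on them (this characterises equality in
  the algebraic tensor product over a field). Elements of C = A / A B_+ are represented by
  elements of A (representatives of pi_C); equality in C is membership of the difference in
  the left ideal A B_+. Tensors in V (x) C are lists in V x A compared by bilinear forms
  vanishing on V x A B_+, i.e. by the dual of V (x) C.
\<close>

definition cvec :: "(complex \<Rightarrow> 'v::ab_group_add \<Rightarrow> 'v) \<Rightarrow> bool" where
  "cvec sc \<longleftrightarrow> (\<forall>c x y. sc c (x + y) = sc c x + sc c y) \<and> (\<forall>c d x. sc (c + d) x = sc c x + sc d x)
     \<and> (\<forall>c d x. sc c (sc d x) = sc (c * d) x) \<and> (\<forall>x. sc 1 x = x)"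

definition calg :: "(complex \<Rightarrow> 'a::ring_1 \<Rightarrow> 'a) \<Rightarrow> bool" where
  "calg sc \<longleftrightarrow> cvec sc \<and> (\<forall>c a b. sc c (a * b) = sc c a * b \<and> sc c (a * b) = a * sc c b)"

definition linf :: "(complex \<Rightarrow> 'v::ab_group_add \<Rightarrow> 'v) \<Rightarrow> ('v \<Rightarrow> complex) \<Rightarrow> bool" where
  "linf sc f \<longleftrightarrow> (\<forall>x y. f (x + y) = f x + f y) \<and> (\<forall>c x. f (sc c x) = c * f x)"

definition linmap :: "(complex \<Rightarrow> 'v::ab_group_add \<Rightarrow> 'v) \<Rightarrow> (complex \<Rightarrow> 'w::ab_group_add \<Rightarrow> 'w) \<Rightarrow> ('v \<Rightarrow> 'w) \<Rightarrow> bool" where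
  "linmap scV scW f \<longleftrightarrow> (\<forall>x y. f (x + y) = f x + f y) \<and> (\<forall>c x. f (scV c x) = scW c (f x))"

definition bilin :: "(complex \<Rightarrow> 'v::ab_group_add \<Rightarrow> 'v) \<Rightarrow> (complex \<Rightarrow> 'w::ab_group_add \<Rightarrow> 'w)
    \<Rightarrow> ('v \<Rightarrow> 'w \<Rightarrow> complex) \<Rightarrow> bool" where
  "bilin scV scW \<beta> \<longleftrightarrow> (\<forall>y. linf scV (\<lambda>x. \<beta> x y)) \<and> (\<forall>x. linf scW (\<lambda>y. \<beta> x y))"

definition trilin :: "(complex \<Rightarrow> 'u::ab_group_add \<Rightarrow> 'u) \<Rightarrow> (complex \<Rightarrow> 'v::ab_group_add \<Rightarrow> 'v)
    \<Rightarrow> (complex \<Rightarrow> 'w::ab_group_add \<Rightarrow> 'w) \<Rightarrow> ('u \<Rightarrow> 'v \<Rightarrow> 'w \<Rightarrow> complex) \<Rightarrow> bool" where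
  "trilin scU scV scW \<gamma> \<longleftrightarrow> (\<forall>y z. linf scU (\<lambda>x. \<gamma> x y z)) \<and> (\<forall>x z. linf scV (\<lambda>y. \<gamma> x y z))
     \<and> (\<forall>x y. linf scW (\<lambda>z. \<gamma> x y z))"

definition tsum :: "('v \<Rightarrow> 'w \<Rightarrow> complex) \<Rightarrow> ('v \<times> 'w) list \<Rightarrow> complex" where
  "tsum \<beta> xs = sum_list (map (\<lambda>(x, y). \<beta> x y) xs)"

definition teq :: "(complex \<Rightarrow> 'v::ab_group_add \<Rightarrow> 'v) \<Rightarrow> (complex \<Rightarrow> 'w::ab_group_add \<Rightarrow> 'w)
    \<Rightarrow> ('v \<times> 'w) list \<Rightarrow> ('v \<times> 'w) list \<Rightarrow> bool" where
  "teq scV scW xs ys \<longleftrightarrow> (\<forall>\<beta>. bilin scV scW \<beta> \<longrightarrow> tsum \<beta> xs = tsum \<beta> ys)"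

definition cqg_hopf :: "(complex \<Rightarrow> 'a::ring_1 \<Rightarrow> 'a) \<Rightarrow> ('a \<Rightarrow> ('a \<times> 'a) list) \<Rightarrow> ('a \<Rightarrow> complex)
    \<Rightarrow> ('a \<Rightarrow> 'a) \<Rightarrow> ('a \<Rightarrow> 'a) \<Rightarrow> ('a \<Rightarrow> complex) \<Rightarrow> bool" where
  "cqg_hopf sc \<Delta> \<epsilon> S st \<Phi> \<longleftrightarrow>
     calg sc
   \<comment> \<open>comultiplication: linear, unital, multiplicative, coassociative\<close>
   \<and> (\<forall>x y. teq sc sc (\<Delta> (x + y)) (\<Delta> x @ \<Delta> y))
   \<and> (\<forall>c x. teq sc sc (\<Delta> (sc c x)) (map (\<lambda>(p, q). (sc c p, q)) (\<Delta> x)))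
   \<and> (\<forall>x y. teq sc sc (\<Delta> (x * y)) [(p * p', q * q'). (p, q) \<leftarrow> \<Delta> x, (p', q') \<leftarrow> \<Delta> y])
   \<and> teq sc sc (\<Delta> 1) [(1, 1)]
   \<and> (\<forall>\<gamma> a. trilin sc sc sc \<gamma> \<longrightarrow>
        sum_list (map (\<lambda>(p, q). sum_list (map (\<lambda>(r, s). \<gamma> r s q) (\<Delta> p))) (\<Delta> a))
      = sum_list (map (\<lambda>(p, q). sum_list (map (\<lambda>(r, s). \<gamma> p r s) (\<Delta> q))) (\<Delta> a)))
   \<comment> \<open>counit: linear, multiplicative, unital\<close>
   \<and> linf sc \<epsilon> \<and> (\<forall>x y. \<epsilon> (x * y) = \<epsilon> x * \<epsilon> y) \<and> \<epsilon> 1 = 1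
   \<and> (\<forall>a. sum_list (map (\<lambda>(p, q). sc (\<epsilon> p) q) (\<Delta> a)) = a)
   \<and> (\<forall>a. sum_list (map (\<lambda>(p, q). sc (\<epsilon> q) p) (\<Delta> a)) = a)
   \<comment> \<open>antipode\<close>
   \<and> linmap sc sc S
   \<and> (\<forall>a. sum_list (map (\<lambda>(p, q). S p * q) (\<Delta> a)) = sc (\<epsilon> a) 1)
   \<and> (\<forall>a. sum_list (map (\<lambda>(p, q). p * S q) (\<Delta> a)) = sc (\<epsilon> a) 1)
   \<comment> \<open>anti-linear involution making A a *-algebra, Delta a *-homomorphism\<close>
   \<and> (\<forall>x y. st (x + y) = st x + st y) \<and> (\<forall>c x. st (sc c x) = sc (cnj c) (st x))
   \<and> (\<forall>x. st (st x) = x) \<and> (\<forall>x y. st (x * y) = st y * st x)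
   \<and> (\<forall>a. teq sc sc (\<Delta> (st a)) (map (\<lambda>(p, q). (st p, st q)) (\<Delta> a)))
   \<comment> \<open>Phi is a state (positive unital linear functional), left and right invariant\<close>
   \<and> linf sc \<Phi> \<and> \<Phi> 1 = 1 \<and> (\<forall>a. Im (\<Phi> (st a * a)) = 0 \<and> Re (\<Phi> (st a * a)) \<ge> 0)
   \<and> (\<forall>a. sum_list (map (\<lambda>(p, q). sc (\<Phi> p) q) (\<Delta> a)) = sc (\<Phi> a) 1)
   \<and> (\<forall>a. sum_list (map (\<lambda>(p, q). sc (\<Phi> q) p) (\<Delta> a)) = sc (\<Phi> a) 1)"

definition right_coideal_star_subalg :: "(complex \<Rightarrow> 'a::ring_1 \<Rightarrow> 'a) \<Rightarrow> ('a \<Rightarrow> ('a \<times> 'a) list)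
    \<Rightarrow> ('a \<Rightarrow> 'a) \<Rightarrow> 'a set \<Rightarrow> bool" where
  "right_coideal_star_subalg sc \<Delta> st B \<longleftrightarrow>
     1 \<in> B \<and> (\<forall>x\<in>B. \<forall>y\<in>B. x + y \<in> B \<and> x * y \<in> B) \<and> (\<forall>c. \<forall>x\<in>B. sc c x \<in> B)
   \<and> (\<forall>x\<in>B. st x \<in> B)
   \<and> (\<forall>b\<in>B. \<exists>xs. (\<forall>(p, q)\<in>set xs. p \<in> B) \<and> teq sc sc (\<Delta> b) xs)"

definition Bplus :: "('a \<Rightarrow> complex) \<Rightarrow> 'a set \<Rightarrow> 'a set" where
  "Bplus \<epsilon> B = {b \<in> B. \<epsilon> b = 0}"

definition ABplus :: "('a \<Rightarrow> complex) \<Rightarrow> 'a::ring_1 set \<Rightarrow> 'a set" where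
  "ABplus \<epsilon> B = {sum_list (map (\<lambda>(a, b). a * b) xs) | xs. \<forall>(a, b)\<in>set xs. b \<in> Bplus \<epsilon> B}"

definition teqC :: "(complex \<Rightarrow> 'v::ab_group_add \<Rightarrow> 'v) \<Rightarrow> (complex \<Rightarrow> 'a::ring_1 \<Rightarrow> 'a) \<Rightarrow> 'a set
    \<Rightarrow> ('v \<times> 'a) list \<Rightarrow> ('v \<times> 'a) list \<Rightarrow> bool" where
  "teqC scV sc J xs ys \<longleftrightarrow>
     (\<forall>\<beta>. bilin scV sc \<beta> \<and> (\<forall>x y. y \<in> J \<longrightarrow> \<beta> x y = 0) \<longrightarrow> tsum \<beta> xs = tsum \<beta> ys)"

text \<open>Objects of the category _B Rep^C (unitary DK-representations). act is the B-action,
  \<delta> the C-coaction v \<mapsto> v_(0) (x) v_(1), ip the inner product (linear in the second argument).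
  C carries comultiplication pi(a) \<mapsto> pi(a_(1)) (x) pi(a_(2)), counit pi(a) \<mapsto> eps a, left A-action
  a . pi(a') = pi(a a') and involution pi(a)^dagger = pi(S(a)^*).\<close>
definition DK_rep :: "(complex \<Rightarrow> 'a::ring_1 \<Rightarrow> 'a) \<Rightarrow> ('a \<Rightarrow> ('a \<times> 'a) list) \<Rightarrow> ('a \<Rightarrow> complex)
    \<Rightarrow> ('a \<Rightarrow> 'a) \<Rightarrow> ('a \<Rightarrow> 'a) \<Rightarrow> 'a set
    \<Rightarrow> (complex \<Rightarrow> 'v::ab_group_add \<Rightarrow> 'v) \<Rightarrow> ('a \<Rightarrow> 'v \<Rightarrow> 'v) \<Rightarrow> ('v \<Rightarrow> ('v \<times> 'a) list)
    \<Rightarrow> ('v \<Rightarrow> 'v \<Rightarrow> complex) \<Rightarrow> bool" where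
  "DK_rep sc \<Delta> \<epsilon> S st B scV act \<delta> ip \<longleftrightarrow>
   (let J = ABplus \<epsilon> B in
     cvec scV
   \<comment> \<open>left B-module\<close>
   \<and> (\<forall>b\<in>B. linmap scV scV (act b))
   \<and> (\<forall>b\<in>B. \<forall>b'\<in>B. \<forall>v. act (b + b') v = act b v + act b' v \<and> act (b * b') v = act b (act b' v))
   \<and> (\<forall>c. \<forall>b\<in>B. \<forall>v. act (sc c b) v = scV c (act b v))
   \<and> (\<forall>v. act 1 v = v)
   \<comment> \<open>right C-comodule\<close>
   \<and> (\<forall>v w. teqC scV sc J (\<delta> (v + w)) (\<delta> v @ \<delta> w))
   \<and> (\<forall>c v. teqC scV sc J (\<delta> (scV c v)) (map (\<lambda>(x, y). (scV c x, y)) (\<delta> v)))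
   \<and> (\<forall>v. sum_list (map (\<lambda>(x, y). scV (\<epsilon> y) x) (\<delta> v)) = v)
   \<and> (\<forall>\<gamma> v. trilin scV sc sc \<gamma> \<and> (\<forall>x y z. y \<in> J \<longrightarrow> \<gamma> x y z = 0)
          \<and> (\<forall>x y z. z \<in> J \<longrightarrow> \<gamma> x y z = 0) \<longrightarrow>
        sum_list (map (\<lambda>(x, y). sum_list (map (\<lambda>(x', y'). \<gamma> x' y' y) (\<delta> x))) (\<delta> v))
      = sum_list (map (\<lambda>(x, y). sum_list (map (\<lambda>(p, q). \<gamma> x p q) (\<Delta> y))) (\<delta> v)))
   \<comment> \<open>compatibility (bv)_(0) (x) (bv)_(1) = b_(1) v_(0) (x) b_(2) . v_(1),
       for any representative of Delta(b) in B (x) A\<close>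
   \<and> (\<forall>b\<in>B. \<forall>v xs. (\<forall>(p, q)\<in>set xs. p \<in> B) \<and> teq sc sc (\<Delta> b) xs \<longrightarrow>
        teqC scV sc J (\<delta> (act b v)) [(act p x, q * y). (p, q) \<leftarrow> xs, (x, y) \<leftarrow> \<delta> v])
   \<comment> \<open>pre-Hilbert space\<close>
   \<and> (\<forall>v w w'. ip v (w + w') = ip v w + ip v w')
   \<and> (\<forall>c v w. ip v (scV c w) = c * ip v w)
   \<and> (\<forall>v w. ip w v = cnj (ip v w))
   \<and> (\<forall>v. Re (ip v v) \<ge> 0 \<and> (ip v v = 0 \<longrightarrow> v = 0))
   \<comment> \<open>unitarity conditions\<close>
   \<and> (\<forall>b\<in>B. \<forall>v w. ip v (act b w) = ip (act (st b) v) w)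
   \<and> (\<forall>v w. sum_list (map (\<lambda>(x, y). sc (ip v x) y) (\<delta> w))
          - sum_list (map (\<lambda>(x, y). sc (ip x w) (st (S y))) (\<delta> v)) \<in> J))"

end

theory Submission
  imports Defs
begin

(*
  Hermitian symmetry of <a, a'> = Phi(a^* a') is positivity of Phi plus polarisation, and the
  module, comodule and compatibility conditions are linearity, multiplicativity and
  coassociativity of Delta. The rest rests on the strong invariance
      Phi(a w_(1)) w_(2) = Phi(a_(1) w) Sbar(a_(2)),      Sbar = * o S o *,
  a consequence of the invariance of Phi, coassociativity and Sbar(a_(2)) a_(1) = eps(a) 1.
  For a = v^* it is the unitarity of the coaction. For positive definiteness let Phi(v^* v) = 0.
  By Cauchy-Schwarz v lies in K = {u. Phi(A u) = 0}, and by strong invariance K is stable under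
  all slice maps (id (x) omega) o Delta. So Delta u lies in K (x) A for u in K, whence
  eps(u) = Phi(Sbar(u_(2)) u_(1)) = 0. Hence omega(v) = eps((id (x) omega) Delta v) = 0 for every
  linear functional omega, i.e. v = 0.
*)

definition sum_pairs :: "('v \<Rightarrow> 'w \<Rightarrow> 'b::comm_monoid_add) \<Rightarrow> ('v \<times> 'w) list \<Rightarrow> 'b" where
  "sum_pairs F L = (\<Sum>(p, q)\<leftarrow>L. F p q)"

lemma sum_pairs_Nil [simp]: "sum_pairs F [] = 0"
  by (simp add: sum_pairs_def)

lemma sum_pairs_Cons [simp]: "sum_pairs F ((p, q) # L) = F p q + sum_pairs F L"
  by (simp add: sum_pairs_def)

lemma sum_pairs_append [simp]: "sum_pairs F (L @ M) = sum_pairs F L + sum_pairs F M"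
  by (simp add: sum_pairs_def)

lemma tsum_eq_sum_pairs: "tsum \<beta> L = sum_pairs \<beta> L"
  by (simp add: tsum_def sum_pairs_def)

lemma sum_pairs_zero [simp]: "sum_pairs (\<lambda>p q. 0) L = 0"
  by (induction L) auto

lemma sum_pairs_add: "sum_pairs (\<lambda>p q. F p q + G p q) L = sum_pairs F L + sum_pairs G L"
  by (induction L) (auto simp: algebra_simps)

lemma sum_pairs_diff:
  "sum_pairs (\<lambda>p q. F p q - G p q) L = sum_pairs F L - (sum_pairs G L :: 'b::ab_group_add)"
  by (induction L) (auto simp: algebra_simps)

lemma sum_pairs_cong:
  "(\<And>p q. (p, q) \<in> set L \<Longrightarrow> F p q = G p q) \<Longrightarrow> sum_pairs F L = sum_pairs G L"
  by (induction L) auto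

lemma sum_pairs_map:
  "sum_pairs F (map (\<lambda>(p, q). (f p, g q)) L) = sum_pairs (\<lambda>p q. F (f p) (g q)) L"
  by (induction L) auto

lemma sum_pairs_swap:
  "sum_pairs (\<lambda>p q. sum_pairs (H p q) M) L = sum_pairs (\<lambda>r s. sum_pairs (\<lambda>p q. H p q r s) L) M"
  by (induction L) (auto simp: sum_pairs_add)

lemma sum_pairs_concat:
  "sum_pairs F [(f p p', g q q'). (p, q) \<leftarrow> L, (p', q') \<leftarrow> M]
     = sum_pairs (\<lambda>p q. sum_pairs (\<lambda>p' q'. F (f p p') (g q q')) M) L"
  by (induction L) (auto simp: sum_pairs_map)

lemma additive_sum_pairs:
  "additive f \<Longrightarrow> f (sum_pairs F L) = sum_pairs (\<lambda>p q. f (F p q)) L"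
  by (induction L) (auto simp: additive.zero additive.add)

section \<open>Linear functionals and tensors\<close>

lemma vector_space_if_cvec: "cvec sc \<Longrightarrow> vector_space sc"
  by (unfold_locales) (auto simp: cvec_def)

lemma additive_if_linf: "linf sc f \<Longrightarrow> additive f"
  by (simp add: additive.intro linf_def)

lemma linf_scale: "linf sc f \<Longrightarrow> f (sc c x) = c * f x"
  by (simp add: linf_def)

lemma linf_eq_linmap: "linf sc = linmap sc (*)"
  by (auto simp: fun_eq_iff linf_def linmap_def)

lemma cvec_mult: "cvec ((*) :: complex \<Rightarrow> complex \<Rightarrow> complex)"
  by (simp add: cvec_def algebra_simps)

lemma linmap_sum_pairs:
  assumes "cvec scW" "\<And>p q. linmap scV scW (\<lambda>x. F x p q)"
  shows "linmap scV scW (\<lambda>x. sum_pairs (F x) L)"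
proof -
  interpret W: vector_space scW using assms(1) by (rule vector_space_if_cvec)
  show ?thesis
    using assms(2) by (induction L) (auto simp: linmap_def algebra_simps)
qed

lemma linf_exists_eq_1:
  assumes "cvec sc" "x \<noteq> 0"
  shows "\<exists>f. linf sc f \<and> f x = 1"
proof -
  interpret V: vector_space sc using assms(1) by (rule vector_space_if_cvec)
  interpret vector_space_pair sc "(*) :: complex \<Rightarrow> complex \<Rightarrow> complex"
    using assms(1) by unfold_locales (auto simp: cvec_def algebra_simps)
  have "V.independent {x}" using assms(2) by simp
  from linear_independent_extend[OF this, of "\<lambda>_. 1"]
  show ?thesis unfolding Vector_Spaces.linear_iff linf_def by auto
qed

lemma eq_if_linf_eq:
  assumes "cvec sc" and eq: "\<And>f. linf sc f \<Longrightarrow> f x = f y"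
  shows "x = y"
proof (rule ccontr)
  assume "x \<noteq> y"
  then obtain f where f: "linf sc f" "f (x - y) = 1"
    using linf_exists_eq_1[OF assms(1)] by (metis right_minus_eq)
  with eq[OF f(1)] additive.diff[OF additive_if_linf[OF f(1)]] show False by simp
qed

definition bilinmap :: "(complex \<Rightarrow> 'u::ab_group_add \<Rightarrow> 'u) \<Rightarrow> (complex \<Rightarrow> 'v::ab_group_add \<Rightarrow> 'v)
    \<Rightarrow> (complex \<Rightarrow> 'w::ab_group_add \<Rightarrow> 'w) \<Rightarrow> ('u \<Rightarrow> 'v \<Rightarrow> 'w) \<Rightarrow> bool" where
  "bilinmap scU scV scW F \<longleftrightarrow> (\<forall>y. linmap scU scW (\<lambda>x. F x y)) \<and> (\<forall>x. linmap scV scW (\<lambda>y. F x y))"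

definition trilinmap :: "(complex \<Rightarrow> 'u::ab_group_add \<Rightarrow> 'u) \<Rightarrow> (complex \<Rightarrow> 'v::ab_group_add \<Rightarrow> 'v)
    \<Rightarrow> (complex \<Rightarrow> 'w::ab_group_add \<Rightarrow> 'w) \<Rightarrow> (complex \<Rightarrow> 'x::ab_group_add \<Rightarrow> 'x)
    \<Rightarrow> ('u \<Rightarrow> 'v \<Rightarrow> 'w \<Rightarrow> 'x) \<Rightarrow> bool" where
  "trilinmap scU scV scW scX G \<longleftrightarrow> (\<forall>y z. linmap scU scX (\<lambda>x. G x y z))
     \<and> (\<forall>x z. linmap scV scX (\<lambda>y. G x y z)) \<and> (\<forall>x y. linmap scW scX (\<lambda>z. G x y z))"

lemma teq_sum_pairs:
  assumes "teq scU scV xs ys" "cvec scW" "bilinmap scU scV scW F"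
  shows "sum_pairs F xs = sum_pairs F ys"
proof (rule eq_if_linf_eq[OF assms(2)])
  fix f assume f: "linf scW f"
  then have "bilin scU scV (\<lambda>p q. f (F p q))"
    using assms(3) unfolding bilin_def linf_def bilinmap_def linmap_def by auto
  with assms(1) f show "f (sum_pairs F xs) = f (sum_pairs F ys)"
    by (simp add: teq_def tsum_eq_sum_pairs additive_sum_pairs[OF additive_if_linf[OF f]])
qed

lemma teq_trans: "teq scV scW xs ys \<Longrightarrow> teq scV scW ys zs \<Longrightarrow> teq scV scW xs zs"
  unfolding teq_def by metis

lemma teqC_if_teq: "teq scV sc xs ys \<Longrightarrow> teqC scV sc J xs ys"
  unfolding teq_def teqC_def by blast

lemma zero_in_ABplus: "0 \<in> ABplus \<epsilon> B"
  unfolding ABplus_def by (rule CollectI, rule exI[of _ "[]"]) simp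

definition slice :: "(complex \<Rightarrow> 'v::ab_group_add \<Rightarrow> 'v) \<Rightarrow> ('w \<Rightarrow> complex) \<Rightarrow> ('v \<times> 'w) list \<Rightarrow> 'v" where
  "slice scV \<omega> L = sum_pairs (\<lambda>p q. scV (\<omega> q) p) L"

lemma slice_eliminate:
  assumes "cvec scV" "linf scW \<omega>"
  shows "slice scV \<omega> (map (\<lambda>(p, q). (p, q - scW (\<omega>0 q) q1)) L)
    = slice scV \<omega> L - scV (\<omega> q1) (slice scV \<omega>0 L)"
proof -
  interpret V: vector_space scV using assms(1) by (rule vector_space_if_cvec)
  show ?thesis
    by (simp add: slice_def sum_pairs_map additive.diff[OF additive_if_linf[OF assms(2)]]
        linf_scale[OF assms(2)] V.scale_left_diff_distrib sum_pairs_diff mult.commute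
        additive_sum_pairs[OF additive.intro] V.scale_right_distrib)
qed

lemma sum_pairs_eliminate:
  assumes "bilin scV scW \<beta>"
  shows "sum_pairs \<beta> (map (\<lambda>(p, q). (p, q - scW (\<omega>0 q) q1)) L)
    = sum_pairs \<beta> L - \<beta> (slice scV \<omega>0 L) q1"
proof -
  have \<beta>_left: "linf scV (\<lambda>p. \<beta> p q)" and \<beta>_right: "linf scW (\<lambda>q. \<beta> p q)" for p q
    using assms unfolding bilin_def by blast+
  have "sum_pairs \<beta> (map (\<lambda>(p, q). (p, q - scW (\<omega>0 q) q1)) L)
      = sum_pairs (\<lambda>p q. \<beta> p q - \<omega>0 q * \<beta> p q1) L"
    by (simp add: sum_pairs_map additive.diff[OF additive_if_linf[OF \<beta>_right]] linf_scale[OF \<beta>_right])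
  also have "\<dots> = sum_pairs \<beta> L - \<beta> (slice scV \<omega>0 L) q1"
    by (simp add: sum_pairs_diff slice_def linf_scale[OF \<beta>_left]
        additive_sum_pairs[OF additive_if_linf[OF \<beta>_left]])
  finally show ?thesis .
qed

text \<open>A tensor all of whose slices lie in K lies in K \<otimes> W, and is thus killed by every
  bilinear form vanishing on K \<times> W.\<close>

lemma sum_pairs_eq_0_if_slices_in_subspace:
  fixes scV :: "complex \<Rightarrow> 'v::ab_group_add \<Rightarrow> 'v" and scW :: "complex \<Rightarrow> 'w::ab_group_add \<Rightarrow> 'w"
  assumes V: "cvec scV" and W: "cvec scW" and K: "module.subspace scV K"
    and \<beta>: "bilin scV scW \<beta>" and \<beta>_K: "\<And>p q. p \<in> K \<Longrightarrow> \<beta> p q = 0"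
  shows "(\<And>\<omega>. linf scW \<omega> \<Longrightarrow> slice scV \<omega> L \<in> K) \<Longrightarrow> sum_pairs \<beta> L = 0"
proof (induction L rule: length_induct)
  case (1 L)
  interpret V: vector_space scV using V by (rule vector_space_if_cvec)
  have \<beta>_left: "linf scV (\<lambda>p. \<beta> p q)" and \<beta>_right: "linf scW (\<lambda>q. \<beta> p q)" for p q
    using \<beta> unfolding bilin_def by blast+
  show ?case
  proof (cases L)
    case Nil
    then show ?thesis by simp
  next
    case (Cons h L')
    obtain p1 q1 where h: "h = (p1, q1)" by fastforce
    show ?thesis
    proof (cases "q1 = 0")
      case True
      have "slice scV \<omega> L' \<in> K" if "linf scW \<omega>" for \<omega>
        using 1(2)[OF that] additive.zero[OF additive_if_linf[OF that]]
        by (simp add: slice_def Cons h True)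
      then have "sum_pairs \<beta> L' = 0" using 1(1) Cons by simp
      then show ?thesis
        using additive.zero[OF additive_if_linf[OF \<beta>_right]] by (simp add: Cons h True)
    next
      case False
      \<comment> \<open>Gaussian elimination: remove the q1-component of the remaining second legs.\<close>
      then obtain \<omega>0 where \<omega>0: "linf scW \<omega>0" "\<omega>0 q1 = 1"
        using linf_exists_eq_1[OF W] by blast
      define P where "P = slice scV \<omega>0 L"
      have "P \<in> K" unfolding P_def by (rule 1(2)[OF \<omega>0(1)])
      have P: "slice scV \<omega>0 L' = P - p1" using \<omega>0(2) by (simp add: P_def slice_def Cons h)
      define L2 where "L2 = map (\<lambda>(p, q). (p, q - scW (\<omega>0 q) q1)) L'"
      have "slice scV \<omega> L2 = slice scV \<omega> L - scV (\<omega> q1) P" if "linf scW \<omega>" for \<omega>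
      proof -
        have "slice scV \<omega> L2 = slice scV \<omega> L' - scV (\<omega> q1) (P - p1)"
          using slice_eliminate[OF V that] P by (simp add: L2_def)
        then show ?thesis
          by (simp add: Cons h slice_def V.scale_right_diff_distrib algebra_simps)
      qed
      then have "slice scV \<omega> L2 \<in> K" if "linf scW \<omega>" for \<omega>
        using 1(2)[OF that] \<open>P \<in> K\<close> K V.subspace_diff V.subspace_scale that by metis
      then have "sum_pairs \<beta> L2 = 0" using 1(1) by (simp add: L2_def Cons)
      then show ?thesis
        using \<beta>_K[OF \<open>P \<in> K\<close>] additive.add[OF additive_if_linf[OF \<beta>_left], of p1 "P - p1" q1]
        by (simp add: L2_def sum_pairs_eliminate[OF \<beta>] P Cons h)
    qed
  qed
qed

section \<open>Compact quantum group algebras\<close>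

locale cqg =
  fixes sc :: "complex \<Rightarrow> 'a::ring_1 \<Rightarrow> 'a"
    and \<Delta> :: "'a \<Rightarrow> ('a \<times> 'a) list" and \<epsilon> :: "'a \<Rightarrow> complex"
    and S st :: "'a \<Rightarrow> 'a" and \<Phi> :: "'a \<Rightarrow> complex"
  assumes cqg_hopf: "cqg_hopf sc \<Delta> \<epsilon> S st \<Phi>"
begin

lemma cvec: "cvec sc"
  using cqg_hopf unfolding cqg_hopf_def calg_def by (elim conjE) fast

sublocale vector_space sc
  using cvec by (rule vector_space_if_cvec)

lemma scale_mult_left: "sc c a * b = sc c (a * b)"
  using cqg_hopf unfolding cqg_hopf_def calg_def by (elim conjE) metis

lemma scale_mult_right: "a * sc c b = sc c (a * b)"
  using cqg_hopf unfolding cqg_hopf_def calg_def by (elim conjE) metis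

lemma Delta_add: "teq sc sc (\<Delta> (x + y)) (\<Delta> x @ \<Delta> y)"
  using cqg_hopf unfolding cqg_hopf_def by (elim conjE) fast

lemma Delta_scale: "teq sc sc (\<Delta> (sc c x)) (map (\<lambda>(p, q). (sc c p, q)) (\<Delta> x))"
  using cqg_hopf unfolding cqg_hopf_def by (elim conjE) fast

lemma Delta_mult: "teq sc sc (\<Delta> (x * y)) [(p * p', q * q'). (p, q) \<leftarrow> \<Delta> x, (p', q') \<leftarrow> \<Delta> y]"
  using cqg_hopf unfolding cqg_hopf_def by (elim conjE) fast

lemma Delta_star: "teq sc sc (\<Delta> (st a)) (map (\<lambda>(p, q). (st p, st q)) (\<Delta> a))"
  using cqg_hopf unfolding cqg_hopf_def by (elim conjE) fast

lemma coassoc: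
  "trilin sc sc sc \<gamma> \<Longrightarrow> sum_pairs (\<lambda>p q. sum_pairs (\<lambda>r s. \<gamma> r s q) (\<Delta> p)) (\<Delta> a)
     = sum_pairs (\<lambda>p q. sum_pairs (\<lambda>r s. \<gamma> p r s) (\<Delta> q)) (\<Delta> a)"
  using cqg_hopf unfolding cqg_hopf_def sum_pairs_def by (elim conjE) fast

lemma counit_left: "sum_pairs (\<lambda>p q. sc (\<epsilon> p) q) (\<Delta> a) = a"
  using cqg_hopf unfolding cqg_hopf_def sum_pairs_def by (elim conjE) fast

lemma counit_right: "sum_pairs (\<lambda>p q. sc (\<epsilon> q) p) (\<Delta> a) = a"
  using cqg_hopf unfolding cqg_hopf_def sum_pairs_def by (elim conjE) fast

lemma antipode_right: "sum_pairs (\<lambda>p q. p * S q) (\<Delta> a) = sc (\<epsilon> a) 1"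
  using cqg_hopf unfolding cqg_hopf_def sum_pairs_def by (elim conjE) fast

lemma Phi_invariant_left: "sum_pairs (\<lambda>p q. sc (\<Phi> p) q) (\<Delta> a) = sc (\<Phi> a) 1"
  using cqg_hopf unfolding cqg_hopf_def sum_pairs_def by (elim conjE) fast

lemma eps_scale [simp]: "\<epsilon> (sc c x) = c * \<epsilon> x"
  using cqg_hopf unfolding cqg_hopf_def linf_def by (elim conjE) fast

lemma S_scale [simp]: "S (sc c x) = sc c (S x)"
  using cqg_hopf unfolding cqg_hopf_def linmap_def by (elim conjE) fast

lemma star_scale [simp]: "st (sc c x) = sc (cnj c) (st x)"
  using cqg_hopf unfolding cqg_hopf_def by (elim conjE) fast

lemma star_star [simp]: "st (st x) = x"
  using cqg_hopf unfolding cqg_hopf_def by (elim conjE) fast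

lemma star_mult [simp]: "st (x * y) = st y * st x"
  using cqg_hopf unfolding cqg_hopf_def by (elim conjE) fast

lemma Phi_scale [simp]: "\<Phi> (sc c x) = c * \<Phi> x"
  using cqg_hopf unfolding cqg_hopf_def linf_def by (elim conjE) fast

lemma Phi_one [simp]: "\<Phi> 1 = 1"
  using cqg_hopf unfolding cqg_hopf_def by (elim conjE) fast

lemma Phi_positive: "Im (\<Phi> (st a * a)) = 0 \<and> Re (\<Phi> (st a * a)) \<ge> 0"
  using cqg_hopf unfolding cqg_hopf_def by (elim conjE) fast

sublocale eps: additive \<epsilon>
  using cqg_hopf unfolding cqg_hopf_def linf_def additive_def by (elim conjE) fast

sublocale S: additive S
  using cqg_hopf unfolding cqg_hopf_def linmap_def additive_def by (elim conjE) fast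

sublocale star: additive st
  using cqg_hopf unfolding cqg_hopf_def additive_def by (elim conjE) fast

sublocale Phi: additive \<Phi>
  using cqg_hopf unfolding cqg_hopf_def linf_def additive_def by (elim conjE) fast

lemma star_one [simp]: "st 1 = 1"
  using star_mult[of "st 1" 1] by simp

lemma additive_scale_left: "additive (\<lambda>c. sc c x)"
  by (simp add: additive_def scale_left_distrib)

lemma additive_scale_right: "additive (sc c)"
  by (simp add: additive_def scale_right_distrib)

lemma additive_mult_left: "additive (\<lambda>x. a * x :: 'a)"
  by (simp add: additive_def distrib_left)

lemma additive_mult_right: "additive (\<lambda>x. x * a :: 'a)"
  by (simp add: additive_def distrib_right)

lemmas Phi_sum_pairs = additive_sum_pairs[OF Phi.additive_axioms]
lemmas eps_sum_pairs = additive_sum_pairs[OF eps.additive_axioms]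
lemmas star_sum_pairs = additive_sum_pairs[OF star.additive_axioms]
lemmas scale_sum_pairs = additive_sum_pairs[OF additive_scale_right]
lemmas mult_sum_pairs_left = additive_sum_pairs[OF additive_mult_left]
lemmas mult_sum_pairs_right = additive_sum_pairs[OF additive_mult_right]

lemma sum_pairs_scale_left: "sum_pairs (\<lambda>p q. sc (g p q) x) L = sc (sum_pairs g L) x"
  by (rule additive_sum_pairs[OF additive_scale_left, symmetric])

lemmas linear_simps = linmap_def bilinmap_def trilinmap_def scale_left_distrib scale_right_distrib
  scale_mult_left scale_mult_right distrib_left distrib_right

lemma coassoc_sum_pairs:
  assumes "trilinmap sc sc sc sc G"
  shows "sum_pairs (\<lambda>p q. sum_pairs (\<lambda>r s. G r s q) (\<Delta> p)) (\<Delta> a)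
    = sum_pairs (\<lambda>p q. sum_pairs (\<lambda>r s. G p r s) (\<Delta> q)) (\<Delta> a)"
proof (rule eq_if_linf_eq[OF cvec])
  fix f assume f: "linf sc f"
  then have "trilin sc sc sc (\<lambda>r s q. f (G r s q))"
    using assms unfolding trilin_def trilinmap_def linf_def linmap_def by auto
  from coassoc[OF this, of a] f show "f (sum_pairs (\<lambda>p q. sum_pairs (\<lambda>r s. G r s q) (\<Delta> p)) (\<Delta> a))
    = f (sum_pairs (\<lambda>p q. sum_pairs (\<lambda>r s. G p r s) (\<Delta> q)) (\<Delta> a))"
    by (simp add: additive_sum_pairs[OF additive_if_linf[OF f]])
qed

lemma Delta_mult_sum_pairs:
  assumes "bilinmap sc sc sc F"
  shows "sum_pairs F (\<Delta> (x * y)) = sum_pairs (\<lambda>p q. sum_pairs (\<lambda>p' q'. F (p * p') (q * q')) (\<Delta> y)) (\<Delta> x)"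
  using teq_sum_pairs[OF Delta_mult cvec assms] by (simp add: sum_pairs_concat)

lemma Delta_star_sum_pairs:
  assumes "bilinmap sc sc sc F"
  shows "sum_pairs F (\<Delta> (st a)) = sum_pairs (\<lambda>p q. F (st p) (st q)) (\<Delta> a)"
  using teq_sum_pairs[OF Delta_star cvec assms] by (simp add: sum_pairs_map)

lemma teq_mult_tensor:
  assumes "teq sc sc xs ys"
  shows "teq sc sc [(p * x, q * y). (p, q) \<leftarrow> xs, (x, y) \<leftarrow> zs] [(p * x, q * y). (p, q) \<leftarrow> ys, (x, y) \<leftarrow> zs]"
  unfolding teq_def
proof (intro allI impI)
  fix \<beta> assume "bilin sc sc \<beta>"
  then have "bilin sc sc (\<lambda>p q. sum_pairs (\<lambda>x y. \<beta> (p * x) (q * y)) zs)"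
    unfolding bilin_def linf_eq_linmap
    by (intro conjI allI linmap_sum_pairs cvec_mult)
      (simp_all add: linmap_def distrib_left distrib_right scale_mult_left)
  with assms show "tsum \<beta> [(p * x, q * y). (p, q) \<leftarrow> xs, (x, y) \<leftarrow> zs]
      = tsum \<beta> [(p * x, q * y). (p, q) \<leftarrow> ys, (x, y) \<leftarrow> zs]"
    by (simp add: teq_def tsum_eq_sum_pairs sum_pairs_concat)
qed

lemma Delta_mult_teq:
  "teq sc sc (\<Delta> b) xs \<Longrightarrow> teq sc sc (\<Delta> (b * v)) [(p * x, q * y). (p, q) \<leftarrow> xs, (x, y) \<leftarrow> \<Delta> v]"
  by (rule teq_trans[OF Delta_mult teq_mult_tensor])

lemma eps_star: "\<epsilon> (st y) = cnj (\<epsilon> y)"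
proof -
  \<comment> \<open>Since Delta is a *-homomorphism, \<epsilon>' is a left counit; a left and a right counit coincide.\<close>
  define \<epsilon>' where "\<epsilon>' x = cnj (\<epsilon> (st x))" for x
  have "additive \<epsilon>'"
    by (simp add: additive_def \<epsilon>'_def star.add eps.add)
  have \<epsilon>'_scale: "\<epsilon>' (sc c x) = c * \<epsilon>' x" for c x
    by (simp add: \<epsilon>'_def)
  have "bilinmap sc sc sc (\<lambda>p q. sc (\<epsilon> p) q)"
    by (simp add: linear_simps eps.add)
  then have star_y: "st y = sum_pairs (\<lambda>p q. sc (\<epsilon> (st p)) (st q)) (\<Delta> y)"
    by (subst counit_left[symmetric]) (rule Delta_star_sum_pairs)
  have counit_left': "sum_pairs (\<lambda>p q. sc (\<epsilon>' p) q) (\<Delta> y) = y"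
  proof -
    have "sum_pairs (\<lambda>p q. sc (\<epsilon>' p) q) (\<Delta> y) = st (sum_pairs (\<lambda>p q. sc (\<epsilon> (st p)) (st q)) (\<Delta> y))"
      by (simp add: star_sum_pairs \<epsilon>'_def)
    then show ?thesis by (simp flip: star_y)
  qed
  have "\<epsilon>' y = sum_pairs (\<lambda>p q. \<epsilon> q * \<epsilon>' p) (\<Delta> y)"
    by (subst counit_right[symmetric]) (simp add: additive_sum_pairs[OF \<open>additive \<epsilon>'\<close>] \<epsilon>'_scale)
  also have "\<dots> = \<epsilon> y"
    by (subst (2) counit_left'[symmetric]) (simp add: eps_sum_pairs mult.commute)
  finally show ?thesis
    unfolding \<epsilon>'_def by (metis complex_cnj_cnj)
qed

text \<open>Sbar is the inverse of the antipode; only the identity antipode_Sbar is used.\<close>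

definition Sbar :: "'a \<Rightarrow> 'a" where
  "Sbar x = st (S (st x))"

lemma linmap_Sbar: "linmap sc sc Sbar"
  by (simp add: linmap_def Sbar_def star.add S.add)

lemma antipode_Sbar: "sum_pairs (\<lambda>p q. Sbar q * p) (\<Delta> y) = sc (\<epsilon> y) 1"
proof -
  have "sum_pairs (\<lambda>p q. Sbar q * p) (\<Delta> y) = st (sum_pairs (\<lambda>p q. st p * S (st q)) (\<Delta> y))"
    by (simp add: Sbar_def star_sum_pairs)
  also have "sum_pairs (\<lambda>p q. st p * S (st q)) (\<Delta> y) = sum_pairs (\<lambda>p q. p * S q) (\<Delta> (st y))"
    by (simp add: Delta_star_sum_pairs linear_simps S.add)
  finally show ?thesis
    by (simp add: antipode_right eps_star)
qed

lemma strong_invariance: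
  "sum_pairs (\<lambda>p q. sc (\<Phi> (a * p)) q) (\<Delta> w) = sum_pairs (\<lambda>p q. sc (\<Phi> (p * w)) (Sbar q)) (\<Delta> a)"
proof -
  have lin_Sbar: "Sbar (x + y) = Sbar x + Sbar y" "Sbar (sc c x) = sc c (Sbar x)" for x y c
    using linmap_Sbar unfolding linmap_def by blast+
  have "sum_pairs (\<lambda>p q. sc (\<Phi> (p * w)) (Sbar q)) (\<Delta> a)
      = sum_pairs (\<lambda>p q. Sbar q * sum_pairs (\<lambda>r s. sc (\<Phi> r) s) (\<Delta> (p * w))) (\<Delta> a)"
    by (simp add: Phi_invariant_left scale_mult_right)
  also have "\<dots> = sum_pairs (\<lambda>p q. sum_pairs (\<lambda>r s.
      sum_pairs (\<lambda>r' s'. Sbar q * sc (\<Phi> (r * r')) (s * s')) (\<Delta> w)) (\<Delta> p)) (\<Delta> a)"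
  proof (rule sum_pairs_cong)
    fix p q
    have "bilinmap sc sc sc (\<lambda>r s. Sbar q * sc (\<Phi> r) s)"
      by (simp add: linear_simps Phi.add)
    then show "Sbar q * sum_pairs (\<lambda>r s. sc (\<Phi> r) s) (\<Delta> (p * w)) = sum_pairs (\<lambda>r s.
        sum_pairs (\<lambda>r' s'. Sbar q * sc (\<Phi> (r * r')) (s * s')) (\<Delta> w)) (\<Delta> p)"
      by (simp only: mult_sum_pairs_left Delta_mult_sum_pairs)
  qed
  also have "\<dots> = sum_pairs (\<lambda>p q. sum_pairs (\<lambda>r s.
      sum_pairs (\<lambda>r' s'. Sbar s * sc (\<Phi> (p * r')) (r * s')) (\<Delta> w)) (\<Delta> q)) (\<Delta> a)"
    by (rule coassoc_sum_pairs[where G = "\<lambda>r s q. sum_pairs (\<lambda>r' s'. Sbar q * sc (\<Phi> (r * r')) (s * s')) (\<Delta> w)"])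
      (unfold trilinmap_def, intro conjI allI linmap_sum_pairs cvec; simp add: linear_simps Phi.add lin_Sbar)
  also have "\<dots> = sum_pairs (\<lambda>p q. sum_pairs (\<lambda>r' s'.
      sc (\<Phi> (p * r')) (sum_pairs (\<lambda>r s. Sbar s * r) (\<Delta> q) * s')) (\<Delta> w)) (\<Delta> a)"
    by (simp add: sum_pairs_swap[of _ "\<Delta> w"] mult_sum_pairs_right scale_sum_pairs
        scale_mult_left scale_mult_right mult.assoc)
  also have "\<dots> = sum_pairs (\<lambda>p q. sum_pairs (\<lambda>r' s'. sc (\<Phi> (p * r') * \<epsilon> q) s') (\<Delta> w)) (\<Delta> a)"
    by (simp add: antipode_Sbar scale_mult_left mult.commute)
  also have "\<dots> = sum_pairs (\<lambda>r' s'. sc (sum_pairs (\<lambda>p q. \<Phi> (sc (\<epsilon> q) p * r')) (\<Delta> a)) s') (\<Delta> w)"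
    by (subst sum_pairs_swap) (simp add: sum_pairs_scale_left scale_mult_left mult.commute)
  also have "\<dots> = sum_pairs (\<lambda>p q. sc (\<Phi> (a * p)) q) (\<Delta> w)"
    by (simp add: counit_right flip: Phi_sum_pairs mult_sum_pairs_right)
  finally show ?thesis ..
qed

section \<open>The Haar state as an inner product\<close>

lemma Phi_hermitian: "\<Phi> (st y * x) = cnj (\<Phi> (st x * y))"
proof -
  define a where "a = \<Phi> (st x * y)"
  define b where "b = \<Phi> (st y * x)"
  have "\<Phi> (st (x + y) * (x + y)) = \<Phi> (st x * x) + a + b + \<Phi> (st y * y)"
    by (simp add: a_def b_def distrib_left distrib_right star.add Phi.add)
  moreover have "\<Phi> (st (x + sc \<i> y) * (x + sc \<i> y))
      = \<Phi> (st x * x) + \<i> * a - \<i> * b - (\<i> * \<i>) * \<Phi> (st y * y)"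
    by (simp add: a_def b_def distrib_left distrib_right left_diff_distrib right_diff_distrib
        star.add Phi.add Phi.diff scale_mult_left scale_mult_right)
  ultimately have "Im b = - Im a" "Re b = Re a"
    using Phi_positive[of "x + y"] Phi_positive[of "x + sc \<i> y"] Phi_positive[of x] Phi_positive[of y]
    by simp_all
  then show ?thesis
    by (simp add: complex_eq_iff a_def[symmetric] b_def[symmetric])
qed

lemma Phi_star_mult_eq_0_if_norm_eq_0:
  assumes "\<Phi> (st v * v) = 0"
  shows "\<Phi> (st x * v) = 0"
proof -
  \<comment> \<open>Positivity at v + t x with t = - k c, k small, forces |c|^2 \<le> 0.\<close>
  define c where "c = \<Phi> (st x * v)"
  define r where "r = \<Phi> (st x * x)"
  define k where "k = 1 / (1 + Re r)"
  have r: "Im r = 0" "Re r \<ge> 0"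
    using Phi_positive unfolding r_def by blast+
  have k: "k > 0" "k * Re r < 1"
    using r unfolding k_def by (auto simp: field_simps)
  define t where "t = complex_of_real (- k) * c"
  have "\<Phi> (st (v + sc t x) * (v + sc t x)) = t * cnj c + cnj t * c + cnj t * t * r"
    by (simp add: distrib_left distrib_right scale_mult_left scale_mult_right star.add Phi.add
        assms c_def r_def Phi_hermitian[of v x])
  moreover have "Re (t * cnj c + cnj t * c + cnj t * t * r) = k * ((Re c)\<^sup>2 + (Im c)\<^sup>2) * (k * Re r - 2)"
    using r by (simp add: t_def power2_eq_square) (simp add: algebra_simps)
  ultimately have "k * ((Re c)\<^sup>2 + (Im c)\<^sup>2) * (k * Re r - 2) \<ge> 0"
    using Phi_positive[of "v + sc t x"] by simp
  with k have "(Re c)\<^sup>2 + (Im c)\<^sup>2 \<le> 0"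
    by (simp add: zero_le_mult_iff mult_le_0_iff)
  then show ?thesis
    by (simp add: c_def complex_eq_iff sum_power2_le_zero_iff)
qed

definition Phi_kernel :: "'a set" where
  "Phi_kernel = {u. \<forall>y. \<Phi> (y * u) = 0}"

lemma subspace_Phi_kernel: "subspace Phi_kernel"
  by (simp add: subspace_def Phi_kernel_def distrib_left Phi.add scale_mult_right Phi.zero)

lemma Phi_kernel_if_norm_eq_0:
  assumes "\<Phi> (st v * v) = 0"
  shows "v \<in> Phi_kernel"
  unfolding Phi_kernel_def
proof (intro CollectI allI)
  fix y
  show "\<Phi> (y * v) = 0"
    using Phi_star_mult_eq_0_if_norm_eq_0[OF assms, of "st y"] by simp
qed

lemma slice_Delta_in_Phi_kernel:
  assumes u: "u \<in> Phi_kernel" and \<omega>: "linf sc \<omega>"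
  shows "slice sc \<omega> (\<Delta> u) \<in> Phi_kernel"
  unfolding Phi_kernel_def
proof (intro CollectI allI)
  fix y
  have "additive \<omega>"
    using \<omega> by (rule additive_if_linf)
  then have "\<Phi> (y * slice sc \<omega> (\<Delta> u)) = \<omega> (sum_pairs (\<lambda>p q. sc (\<Phi> (y * p)) q) (\<Delta> u))"
    by (simp add: slice_def mult_sum_pairs_left Phi_sum_pairs additive_sum_pairs[OF \<open>additive \<omega>\<close>]
        scale_mult_right linf_scale[OF \<omega>] mult.commute)
  also have "\<dots> = \<omega> 0"
    using u by (simp add: strong_invariance Phi_kernel_def)
  finally show "\<Phi> (y * slice sc \<omega> (\<Delta> u)) = 0"
    using \<open>additive \<omega>\<close> by (simp add: additive.zero)
qed

lemma eps_eq_0_on_Phi_kernel: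
  assumes "u \<in> Phi_kernel"
  shows "\<epsilon> u = 0"
proof -
  have "bilin sc sc (\<lambda>p q. \<Phi> (Sbar q * p))"
    using linmap_Sbar by (simp add: bilin_def linf_def linmap_def distrib_left distrib_right Phi.add
        scale_mult_left scale_mult_right)
  then have "sum_pairs (\<lambda>p q. \<Phi> (Sbar q * p)) (\<Delta> u) = 0"
    using sum_pairs_eq_0_if_slices_in_subspace[OF cvec cvec subspace_Phi_kernel]
      slice_Delta_in_Phi_kernel[OF assms] by (simp add: Phi_kernel_def)
  then show ?thesis
    by (simp flip: Phi_sum_pairs add: antipode_Sbar)
qed

lemma eps_slice_Delta:
  assumes "linf sc \<omega>"
  shows "\<epsilon> (slice sc \<omega> (\<Delta> v)) = \<omega> v"
proof -
  have "\<omega> v = \<omega> (sum_pairs (\<lambda>p q. sc (\<epsilon> p) q) (\<Delta> v))"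
    by (simp add: counit_left)
  then show ?thesis
    by (simp add: slice_def eps_sum_pairs additive_sum_pairs[OF additive_if_linf[OF assms]]
        linf_scale[OF assms] mult.commute)
qed

lemma Phi_faithful:
  assumes "\<Phi> (st v * v) = 0"
  shows "v = 0"
proof (rule eq_if_linf_eq[OF cvec])
  fix \<omega> assume \<omega>: "linf sc \<omega>"
  have "\<omega> v = 0"
    using eps_eq_0_on_Phi_kernel[OF slice_Delta_in_Phi_kernel[OF Phi_kernel_if_norm_eq_0[OF assms] \<omega>]]
    by (simp add: eps_slice_Delta[OF \<omega>])
  then show "\<omega> v = \<omega> 0"
    using additive.zero[OF additive_if_linf[OF \<omega>]] by simp
qed

lemma Phi_coaction_unitary:
  "sum_pairs (\<lambda>p q. sc (\<Phi> (st v * p)) q) (\<Delta> w) = sum_pairs (\<lambda>p q. sc (\<Phi> (st p * w)) (st (S q))) (\<Delta> v)"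
proof -
  have "bilinmap sc sc sc (\<lambda>p q. sc (\<Phi> (p * w)) (Sbar q))"
    using linmap_Sbar by (simp add: linear_simps Phi.add)
  then show ?thesis
    by (simp add: strong_invariance Delta_star_sum_pairs Sbar_def)
qed

end

theorem mainTheorem11:
  fixes sc :: "complex \<Rightarrow> 'a::ring_1 \<Rightarrow> 'a"
    and \<Delta> :: "'a \<Rightarrow> ('a \<times> 'a) list" and \<epsilon> :: "'a \<Rightarrow> complex"
    and S st :: "'a \<Rightarrow> 'a" and \<Phi> :: "'a \<Rightarrow> complex" and B :: "'a set"
  assumes "cqg_hopf sc \<Delta> \<epsilon> S st \<Phi>"
    and "right_coideal_star_subalg sc \<Delta> st B"
  shows "DK_rep sc \<Delta> \<epsilon> S st B sc (\<lambda>b a. b * a) \<Delta> (\<lambda>a a'. \<Phi> (st a * a'))"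
proof -
  interpret cqg sc \<Delta> \<epsilon> S st \<Phi>
    using assms(1) by (rule cqg.intro)
  show ?thesis
    unfolding DK_rep_def Let_def
    using Phi_coaction_unitary zero_in_ABplus coassoc counit_right
    by (intro conjI allI ballI impI)
      (auto simp: sum_pairs_def cvec linmap_def distrib_left distrib_right mult.assoc
        scale_mult_left scale_mult_right Phi.add Phi_positive
        intro: teqC_if_teq Delta_add Delta_scale Delta_mult_teq Phi_hermitian Phi_faithful)
qed

end
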